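(* Let $D$ be a positive integer and let $G$ be a graph with $\Delta(G)\le D$. If $G$ is nice with respect to some maximum clique $S$ of $G^2$, then $\omega(G^2)\le \frac52 D$.
   Context: The square $G^2$ of $G$ is obtained from $G$ by adding an edge between every pair of vertices at distance 2 in $G$. A $k$-degeneracy order of a graph is an ordering of its vertices such that each vertex has at most $k$ neighbors later in the order. A graph $G$ is nice with respect to a vertex set $S$ if (a) $S$ is a clique in $G^2$, (b) $S$ is an independent set in $G$, and (c) $G$ has a 2-degeneracy order in which all vertices of $S$ appear consecutively. *)

theory Defs
  imports Main
begin

definition graph :: "'a set \<Rightarrow> ('a \<Rightarrow> 'a \<Rightarrow> bool) \<Rightarrow> bool" where
  "graph V E \<longleftrightarrow> finite V \<and> (\<forall>x y. E x y \<longrightarrow> x \<in> V \<and> y \<in> V)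
     \<and> (\<forall>x y. E x y \<longrightarrow> E y x) \<and> (\<forall>x. \<not> E x x)"

definition degree :: "'a set \<Rightarrow> ('a \<Rightarrow> 'a \<Rightarrow> bool) \<Rightarrow> 'a \<Rightarrow> nat" where
  "degree V E x = card {y \<in> V. E x y}"

definition max_degree_le :: "'a set \<Rightarrow> ('a \<Rightarrow> 'a \<Rightarrow> bool) \<Rightarrow> nat \<Rightarrow> bool" where
  "max_degree_le V E D \<longleftrightarrow> (\<forall>x\<in>V. degree V E x \<le> D)"

definition square :: "('a \<Rightarrow> 'a \<Rightarrow> bool) \<Rightarrow> 'a \<Rightarrow> 'a \<Rightarrow> bool" where
  "square E x y \<longleftrightarrow> x \<noteq> y \<and> (E x y \<or> (\<exists>z. E x z \<and> E z y))"

definition clique :: "'a set \<Rightarrow> ('a \<Rightarrow> 'a \<Rightarrow> bool) \<Rightarrow> 'a set \<Rightarrow> bool" where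
  "clique V E S \<longleftrightarrow> S \<subseteq> V \<and> (\<forall>x\<in>S. \<forall>y\<in>S. x \<noteq> y \<longrightarrow> E x y)"

definition max_clique :: "'a set \<Rightarrow> ('a \<Rightarrow> 'a \<Rightarrow> bool) \<Rightarrow> 'a set \<Rightarrow> bool" where
  "max_clique V E S \<longleftrightarrow> clique V E S \<and> (\<forall>T. clique V E T \<longrightarrow> card T \<le> card S)"

definition clique_number :: "'a set \<Rightarrow> ('a \<Rightarrow> 'a \<Rightarrow> bool) \<Rightarrow> nat" where
  "clique_number V E = Max {card S | S. clique V E S}"

definition independent :: "'a set \<Rightarrow> ('a \<Rightarrow> 'a \<Rightarrow> bool) \<Rightarrow> 'a set \<Rightarrow> bool" where
  "independent V E S \<longleftrightarrow> S \<subseteq> V \<and> (\<forall>x\<in>S. \<forall>y\<in>S. \<not> E x y)"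

definition degeneracy_order :: "'a set \<Rightarrow> ('a \<Rightarrow> 'a \<Rightarrow> bool) \<Rightarrow> nat \<Rightarrow> 'a list \<Rightarrow> bool" where
  "degeneracy_order V E k xs \<longleftrightarrow> distinct xs \<and> set xs = V \<and>
     (\<forall>i<length xs. card {j. i < j \<and> j < length xs \<and> E (xs ! i) (xs ! j)} \<le> k)"

definition nice :: "'a set \<Rightarrow> ('a \<Rightarrow> 'a \<Rightarrow> bool) \<Rightarrow> 'a set \<Rightarrow> bool" where
  "nice V E S \<longleftrightarrow> clique V (square E) S \<and> independent V E S \<and>
     (\<exists>xs. degeneracy_order V E 2 xs \<and> (\<exists>a b c. xs = a @ b @ c \<and> set b = S))"

end

theory Submission
  imports Defs
begin

text \<open>Split a 2-degeneracy order as \<open>A @ B @ C\<close> with \<open>set B = S\<close>. Every \<open>v \<in> S\<close> has at most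
  two neighbours in \<open>C\<close>, so \<open>S\<close> becomes the edge set of a multigraph \<open>H\<close> on \<open>C\<close> whose edges have
  at most two ends. Each vertex of \<open>H\<close> lies on at most \<open>D\<close> edges, and an edge \<open>v\<close> is disjoint
  from at most \<open>D - |ends v|\<close> others: two vertices of \<open>S\<close> with disjoint ends are at distance 2
  through a common neighbour, which lies in \<open>A\<close>, and a vertex of \<open>A\<close> has at most two later
  neighbours in \<open>S\<close>, so these partners inject into the neighbours of \<open>v\<close> in \<open>A\<close>.

  Counting in \<open>H\<close> then gives \<open>2 |S| \<le> 5 D\<close>. Otherwise every vertex of \<open>H\<close> has degree
  close to \<open>D\<close> and at least three neighbours, which forces at least six vertices; seven are
  impossible because \<open>H\<close> then has three pairwise disjoint edges that leave too little degree for
  the remaining vertices, and exactly six are excluded by comparing the slacks \<open>D - deg\<close> of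
  non-adjacent vertices.\<close>

lemma sum_card_members_swap:
  assumes "finite R" "finite S"
  shows "(\<Sum>w\<in>R. card {v\<in>S. w \<in> P v}) = (\<Sum>v\<in>S. card (P v \<inter> R))"
proof -
  have "(\<Sum>w\<in>R. card {v\<in>S. w \<in> P v}) = card (SIGMA w:R. {v\<in>S. w \<in> P v})"
    using assms by (simp add: card_SigmaI)
  also have "(SIGMA w:R. {v\<in>S. w \<in> P v}) = (\<lambda>(v,w). (w,v)) ` (SIGMA v:S. P v \<inter> R)"
    by (auto simp: image_iff)
  also have "card \<dots> = card (SIGMA v:S. P v \<inter> R)"
    by (rule card_image) (auto simp: inj_on_def)
  also have "\<dots> = (\<Sum>v\<in>S. card (P v \<inter> R))"
    using assms by (simp add: card_SigmaI)
  finally show ?thesis .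
qed

lemma sum_sum_symmetric_rel:
  assumes "finite A" and sym: "\<And>x y. R x y \<Longrightarrow> R y x"
  shows "(\<Sum>x\<in>A. \<Sum>y\<in>{y\<in>A. R x y}. f y) = (\<Sum>y\<in>A. of_nat (card {x\<in>A. R y x}) * f y)"
proof -
  have "(\<Sum>x\<in>A. \<Sum>y\<in>{y\<in>A. R x y}. f y) = (\<Sum>y\<in>A. \<Sum>x\<in>{x\<in>A. R x y}. f y)"
    by (rule sum.swap_restrict[OF assms(1,1)])
  also have "\<dots> = (\<Sum>y\<in>A. \<Sum>x\<in>{x\<in>A. R y x}. f y)"
    using sym by (intro sum.cong refl arg_cong[where f="\<lambda>B. sum _ B"]) blast
  finally show ?thesis by simp
qed

lemma ex_not_mem_of_card_less: "finite B \<Longrightarrow> card B < card A \<Longrightarrow> \<exists>a\<in>A. a \<notin> B"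
  by (meson card_mono not_le subsetI)

lemma card_ge_3_subset_two_pairs:
  assumes "N \<subseteq> {x, y, z, t}" "3 \<le> card N"
  shows "{x, y} \<subseteq> N \<or> {z, t} \<subseteq> N" "x \<in> N \<or> y \<in> N" "z \<in> N \<or> t \<in> N"
proof -
  have small: "card N \<le> 2" if "N \<subseteq> {p, q}" for p q
    using card_mono[OF _ that] card_insert_le[of "{q}" p] by (auto simp: card_insert_if split: if_splits)
  show "x \<in> N \<or> y \<in> N"
  proof (rule ccontr)
    assume "\<not> ?thesis"
    hence "N \<subseteq> {z, t}" using assms(1) by auto
    thus False using small assms(2) by fastforce
  qed
  show "z \<in> N \<or> t \<in> N"
  proof (rule ccontr)
    assume "\<not> ?thesis"
    hence "N \<subseteq> {x, y}" using assms(1) by auto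
    thus False using small assms(2) by fastforce
  qed
  show "{x, y} \<subseteq> N \<or> {z, t} \<subseteq> N"
  proof (rule ccontr)
    assume "\<not> ?thesis"
    then obtain p q where "p \<in> {x, y}" "N \<inter> {x, y} \<subseteq> {p}" "q \<in> {z, t}" "N \<inter> {z, t} \<subseteq> {q}"
      by blast
    hence "N \<subseteq> {p, q}" using assms(1) by blast
    thus False using small assms(2) by fastforce
  qed
qed

text \<open>\<open>S\<close> is the edge set of a multigraph, the edge \<open>e\<close> joining the two vertices of \<open>ends e\<close>.\<close>

locale edge_family =
  fixes S :: "'e set" and ends :: "'e \<Rightarrow> 'v set" and D :: nat
  assumes finite_edges: "finite S"
    and card_ends: "e \<in> S \<Longrightarrow> card (ends e) = 2"
    and card_incident_le: "card {e\<in>S. w \<in> ends e} \<le> D"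
    and card_disjoint_le: "e \<in> S \<Longrightarrow> card {u\<in>S. ends u \<inter> ends e = {}} + 2 \<le> D"
begin

definition incident :: "'v \<Rightarrow> 'e set" where
  "incident w = {e\<in>S. w \<in> ends e}"

definition disjoint_edges :: "'e \<Rightarrow> 'e set" where
  "disjoint_edges e = {u\<in>S. ends u \<inter> ends e = {}}"

definition verts :: "'v set" where
  "verts = \<Union>(ends ` S)"

definition nbrs :: "'v \<Rightarrow> 'v set" where
  "nbrs w = (\<Union>e\<in>incident w. ends e) - {w}"

definition non_nbrs :: "'v \<Rightarrow> 'v set" where
  "non_nbrs w = {y\<in>verts. y \<noteq> w \<and> y \<notin> nbrs w}"

abbreviation deg :: "'v \<Rightarrow> int" where
  "deg w \<equiv> int (card (incident w))"

lemma ends_pairE: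
  assumes "e \<in> S"
  obtains x y where "ends e = {x, y}" "x \<noteq> y"
  using card_ends[OF assms] by (metis card_2_iff)

lemma finite_ends: "e \<in> S \<Longrightarrow> finite (ends e)"
  using card_ends by (metis card.infinite zero_neq_numeral)

lemma ends_subset_verts: "e \<in> S \<Longrightarrow> ends e \<subseteq> verts"
  unfolding verts_def by auto

lemma finite_verts: "finite verts"
  unfolding verts_def using finite_edges finite_ends by auto

lemma finite_incident: "finite (incident w)"
  unfolding incident_def using finite_edges by auto

lemma finite_disjoint_edges: "finite (disjoint_edges e)"
  unfolding disjoint_edges_def using finite_edges by auto

lemma deg_le: "deg w \<le> int D"
  using card_incident_le[of w] unfolding incident_def by simp

lemma card_disjoint_edges_le: "e \<in> S \<Longrightarrow> int (card (disjoint_edges e)) + 2 \<le> int D"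
  using card_disjoint_le unfolding disjoint_edges_def by fastforce

lemma sum_incident_eq: "finite R \<Longrightarrow> (\<Sum>w\<in>R. card (incident w)) = (\<Sum>e\<in>S. card (ends e \<inter> R))"
  unfolding incident_def by (rule sum_card_members_swap[OF _ finite_edges])

lemma sum_deg: "(\<Sum>w\<in>verts. deg w) = 2 * int (card S)"
proof -
  have "(\<Sum>w\<in>verts. card (incident w)) = (\<Sum>e\<in>S. card (ends e \<inter> verts))"
    by (rule sum_incident_eq[OF finite_verts])
  also have "\<dots> = (\<Sum>e\<in>S. 2)"
    by (rule sum.cong) (auto simp: ends_subset_verts card_ends Int_absorb2)
  finally show ?thesis by (simp flip: of_nat_sum)
qed

lemma card_edges_add_multiplicity_le:
  assumes "e \<in> S" "ends e = {x, y}"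
  shows "int (card S) + int (card (incident x \<inter> incident y)) \<le> deg x + deg y + int D - 2"
proof -
  have "S \<subseteq> (incident x \<union> incident y) \<union> disjoint_edges e"
    unfolding incident_def disjoint_edges_def using assms(2) by auto
  hence "card S \<le> card (incident x \<union> incident y) + card (disjoint_edges e)"
    by (meson card_Un_le card_mono finite_UnI finite_disjoint_edges finite_incident order_trans)
  moreover have "card (incident x \<union> incident y) + card (incident x \<inter> incident y)
      = card (incident x) + card (incident y)"
    by (rule card_Un_Int[OF finite_incident finite_incident, symmetric])
  ultimately show ?thesis using card_disjoint_edges_le[OF assms(1)] by linarith
qed

lemma deg_lower_bound:
  assumes "w \<in> verts"
  shows "int (card S) + 3 \<le> deg w + 2 * int D"
proof -
  obtain e where e: "e \<in> S" "w \<in> ends e" using assms unfolding verts_def by auto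
  obtain x y where xy: "ends e = {x, y}" using ends_pairE[OF e(1)] by blast
  have "e \<in> incident x \<inter> incident y" using e xy unfolding incident_def by auto
  hence "1 \<le> card (incident x \<inter> incident y)"
    using finite_incident by (metis One_nat_def Suc_leI card_gt_0_iff empty_iff finite_Int)
  moreover have "w = x \<or> w = y" using e xy by auto
  ultimately show ?thesis using card_edges_add_multiplicity_le[OF e(1) xy] deg_le[of x] deg_le[of y] by auto
qed

lemma nbrs_iff: "y \<in> nbrs w \<longleftrightarrow> (\<exists>e\<in>S. ends e = {w, y}) \<and> w \<noteq> y"
proof
  assume "y \<in> nbrs w"
  then obtain e where e: "e \<in> S" "w \<in> ends e" "y \<in> ends e" "y \<noteq> w"
    unfolding nbrs_def incident_def by auto
  have "ends e = {w, y}"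
    using e card_ends[OF e(1)] finite_ends[OF e(1)]
    by (metis card_2_iff doubleton_eq_iff insertE singletonD)
  thus "(\<exists>e\<in>S. ends e = {w, y}) \<and> w \<noteq> y" using e by auto
qed (auto simp: nbrs_def incident_def)

lemma nbrs_sym: "y \<in> nbrs w \<longleftrightarrow> w \<in> nbrs y"
  unfolding nbrs_iff by (auto simp: insert_commute)

lemma nbrs_subset: "nbrs w \<subseteq> verts - {w}"
  unfolding nbrs_def incident_def verts_def by auto

lemma finite_nbrs: "finite (nbrs w)"
  using nbrs_subset finite_verts finite_subset by blast

lemma incident_eq_UN_nbrs: "incident w = (\<Union>y\<in>nbrs w. incident w \<inter> incident y)"
proof
  show "incident w \<subseteq> (\<Union>y\<in>nbrs w. incident w \<inter> incident y)"
  proof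
    fix e assume e: "e \<in> incident w"
    hence "e \<in> S" "w \<in> ends e" unfolding incident_def by auto
    then obtain y where "y \<in> ends e" "y \<noteq> w" by (metis ends_pairE insertCI)
    hence "y \<in> nbrs w" "e \<in> incident y" using e \<open>e \<in> S\<close> unfolding nbrs_def incident_def by auto
    thus "e \<in> (\<Union>y\<in>nbrs w. incident w \<inter> incident y)" using e by auto
  qed
qed auto

lemma deg_le_sum_nbrs:
  "deg w \<le> int (card (nbrs w)) * (deg w + int D - 2 - int (card S)) + (\<Sum>y\<in>nbrs w. deg y)"
proof -
  have "card (incident w) \<le> (\<Sum>y\<in>nbrs w. card (incident w \<inter> incident y))"
    by (subst incident_eq_UN_nbrs) (rule card_UN_le[OF finite_nbrs])
  hence "deg w \<le> (\<Sum>y\<in>nbrs w. int (card (incident w \<inter> incident y)))"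
    by (metis of_nat_le_iff of_nat_sum)
  also have "\<dots> \<le> (\<Sum>y\<in>nbrs w. (deg w + int D - 2 - int (card S)) + deg y)"
  proof (rule sum_mono)
    fix y assume "y \<in> nbrs w"
    then obtain e where "e \<in> S" "ends e = {w, y}" using nbrs_iff by blast
    from card_edges_add_multiplicity_le[OF this]
    show "int (card (incident w \<inter> incident y)) \<le> (deg w + int D - 2 - int (card S)) + deg y"
      by linarith
  qed
  finally show ?thesis by (simp add: sum.distrib)
qed

lemma card_ends_outside_pair_le:
  assumes e2: "e2 \<in> S" and disj: "disjnt (ends e1) (ends e2)" and u: "u \<in> S"
  shows "card (ends u - (ends e1 \<union> ends e2))
    \<le> of_bool (u \<in> disjoint_edges e1 - {e2}) + of_bool (u \<in> disjoint_edges e2 - {e1})"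
proof -
  obtain p q where pq: "ends u = {p, q}" "p \<noteq> q" using ends_pairE[OF u] by blast
  show ?thesis
  proof (cases "u = e1 \<or> u = e2")
    case True
    hence "card (ends u - (ends e1 \<union> ends e2)) = 0" by (auto simp: card_eq_0_iff)
    thus ?thesis by linarith
  next
    case False
    thus ?thesis
      using u pq disj unfolding disjnt_def
      by (cases "p \<in> ends e1"; cases "p \<in> ends e2"; cases "q \<in> ends e1"; cases "q \<in> ends e2")
        (auto simp: disjoint_edges_def card_insert_if insert_Diff_if)
  qed
qed

lemma sum_deg_outside_disjoint_pair:
  assumes e1: "e1 \<in> S" and e2: "e2 \<in> S" and disj: "disjnt (ends e1) (ends e2)"
  shows "(\<Sum>w\<in>verts - (ends e1 \<union> ends e2). deg w) + 2
    \<le> int (card (disjoint_edges e1)) + int (card (disjoint_edges e2))"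
proof -
  let ?R = "verts - (ends e1 \<union> ends e2)"
  have "(\<Sum>w\<in>?R. card (incident w)) = (\<Sum>u\<in>S. card (ends u \<inter> ?R))"
    by (rule sum_incident_eq) (use finite_verts in auto)
  also have "\<dots> \<le> (\<Sum>u\<in>S. of_bool (u \<in> disjoint_edges e1 - {e2})
                         + of_bool (u \<in> disjoint_edges e2 - {e1}))"
  proof (rule sum_mono)
    fix u assume u: "u \<in> S"
    have "ends u \<inter> ?R = ends u - (ends e1 \<union> ends e2)" using ends_subset_verts[OF u] by auto
    thus "card (ends u \<inter> ?R) \<le> of_bool (u \<in> disjoint_edges e1 - {e2})
                                 + of_bool (u \<in> disjoint_edges e2 - {e1})"
      using card_ends_outside_pair_le[OF e2 disj u] by simp
  qed
  also have "\<dots> = card (disjoint_edges e1 - {e2}) + card (disjoint_edges e2 - {e1})"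
    using finite_edges
    by (simp add: sum.distrib)
      (simp add: disjoint_edges_def Int_def set_diff_eq conj_commute conj_left_commute)
  finally have "(\<Sum>w\<in>?R. card (incident w))
      \<le> card (disjoint_edges e1 - {e2}) + card (disjoint_edges e2 - {e1})" .
  moreover have "e2 \<in> disjoint_edges e1" "e1 \<in> disjoint_edges e2"
    using e1 e2 disj unfolding disjoint_edges_def disjnt_def by auto
  moreover have "card (disjoint_edges e1) > 0" "card (disjoint_edges e2) > 0"
    using calculation(2,3) finite_disjoint_edges card_gt_0_iff by blast+
  ultimately show ?thesis
    using finite_disjoint_edges by (simp add: card_Diff_singleton flip: of_nat_sum)
qed

lemma sum_deg_outside_disjoint_triple:
  assumes e: "e1 \<in> S" "e2 \<in> S" "e3 \<in> S"
    and disj: "disjnt (ends e1) (ends e2)" "disjnt (ends e1) (ends e3)" "disjnt (ends e2) (ends e3)"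
  shows "2 * int (card S) + 2 * (\<Sum>w\<in>verts - (ends e1 \<union> ends e2 \<union> ends e3). deg w) + 18
    \<le> 6 * int D"
proof -
  have outside: "(\<Sum>w\<in>verts - X. deg w) = 2 * int (card S) - (\<Sum>w\<in>X. deg w)" if "X \<subseteq> verts" for X
    using sum_diff[OF finite_verts that, of deg] sum_deg by simp
  have union: "(\<Sum>w\<in>ends a \<union> X. deg w) = (\<Sum>w\<in>ends a. deg w) + (\<Sum>w\<in>X. deg w)"
    if "a \<in> S" "finite X" "ends a \<inter> X = {}" for a X
    using sum.union_disjoint[OF finite_ends that(2-3)] that(1) .
  have sub: "ends e1 \<subseteq> verts" "ends e2 \<subseteq> verts" "ends e3 \<subseteq> verts"
    using e ends_subset_verts by auto
  have fin: "finite (ends e2)" "finite (ends e3)" using e finite_ends by auto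
  have "(\<Sum>w\<in>verts - (ends e1 \<union> ends e2). deg w) + 2
      \<le> int (card (disjoint_edges e1)) + int (card (disjoint_edges e2))"
    "(\<Sum>w\<in>verts - (ends e1 \<union> ends e3). deg w) + 2
      \<le> int (card (disjoint_edges e1)) + int (card (disjoint_edges e3))"
    "(\<Sum>w\<in>verts - (ends e2 \<union> ends e3). deg w) + 2
      \<le> int (card (disjoint_edges e2)) + int (card (disjoint_edges e3))"
    using sum_deg_outside_disjoint_pair e disj by auto
  moreover have "int (card (disjoint_edges e1)) + 2 \<le> int D" "int (card (disjoint_edges e2)) + 2 \<le> int D"
    "int (card (disjoint_edges e3)) + 2 \<le> int D"
    using card_disjoint_edges_le e by auto
  moreover have "(\<Sum>w\<in>ends e1 \<union> ends e2 \<union> ends e3. deg w)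
      = (\<Sum>w\<in>ends e1. deg w) + (\<Sum>w\<in>ends e2. deg w) + (\<Sum>w\<in>ends e3. deg w)"
    using union[OF e(1)] union[OF e(2) fin(2)] fin disj by (simp add: Un_assoc Int_Un_distrib disjnt_def)
  ultimately show ?thesis
    using outside sub union[OF e(1) fin(1)] union[OF e(1) fin(2)] union[OF e(2) fin(2)] disj
    by (simp add: Un_assoc disjnt_def)
qed

lemma three_disjoint_edges_from_nbrs:
  assumes e: "e \<in> S" "ends e = {z, t}"
    and a: "x \<in> nbrs a" "y \<in> nbrs a" and b: "x \<in> nbrs b \<or> y \<in> nbrs b"
    and "x \<noteq> y" "a \<noteq> b" "a \<notin> {x, y, z, t}" "b \<notin> {x, y, z, t}" "{x, y} \<inter> {z, t} = {}"
  shows "\<exists>e1\<in>S. \<exists>e2\<in>S. \<exists>e3\<in>S.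
    disjnt (ends e1) (ends e2) \<and> disjnt (ends e1) (ends e3) \<and> disjnt (ends e2) (ends e3)"
proof -
  have *: ?thesis if pq: "p \<in> nbrs a" "q \<in> nbrs b" "p \<in> {x, y}" "q \<in> {x, y}" "p \<noteq> q" for p q
  proof -
    obtain e1 where e1: "e1 \<in> S" "ends e1 = {a, p}" using nbrs_iff[THEN iffD1, OF pq(1)] by blast
    obtain e2 where e2: "e2 \<in> S" "ends e2 = {b, q}" using nbrs_iff[THEN iffD1, OF pq(2)] by blast
    have "disjnt (ends e1) (ends e2)" "disjnt (ends e1) (ends e)" "disjnt (ends e2) (ends e)"
      unfolding e1(2) e2(2) e(2) using assms(5-) pq(3-) by auto
    thus ?thesis using e1(1) e2(1) e(1) by blast
  qed
  from b show ?thesis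
  proof
    assume "x \<in> nbrs b"
    with *[of y x] a \<open>x \<noteq> y\<close> show ?thesis by simp
  next
    assume "y \<in> nbrs b"
    with *[of x y] a \<open>x \<noteq> y\<close> show ?thesis by simp
  qed
qed

lemma sum_deg_non_nbrs_le:
  assumes "w \<in> verts"
  shows "(\<Sum>y\<in>non_nbrs w. deg y)
    \<le> int (card (nbrs w)) * (deg w + int D - 2 - int (card S)) + 2 * int (card S) - 2 * deg w"
proof -
  have fin: "finite (non_nbrs w)" unfolding non_nbrs_def using finite_verts by auto
  have w: "w \<notin> nbrs w \<union> non_nbrs w" using nbrs_subset unfolding non_nbrs_def by auto
  have "verts = insert w (nbrs w \<union> non_nbrs w)"
    using assms nbrs_subset unfolding non_nbrs_def by auto
  hence "(\<Sum>y\<in>verts. deg y) = deg w + (\<Sum>y\<in>nbrs w \<union> non_nbrs w. deg y)"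
    using finite_nbrs fin w by simp
  also have "\<dots> = deg w + (\<Sum>y\<in>nbrs w. deg y) + (\<Sum>y\<in>non_nbrs w. deg y)"
    using finite_nbrs fin by (subst sum.union_disjoint) (auto simp: non_nbrs_def)
  finally have "2 * int (card S) = deg w + (\<Sum>y\<in>nbrs w. deg y) + (\<Sum>y\<in>non_nbrs w. deg y)"
    using sum_deg by simp
  moreover have "deg w \<le> int (card (nbrs w)) * (deg w + int D - 2 - int (card S)) + (\<Sum>y\<in>nbrs w. deg y)"
    by (rule deg_le_sum_nbrs)
  ultimately show ?thesis by linarith
qed

end

locale overfull_edge_family = edge_family +
  assumes overfull: "5 * D + 1 \<le> 2 * card S"
begin

lemma overfull_int: "5 * int D + 1 \<le> 2 * int (card S)"
  using overfull by linarith

lemma card_verts_ge_6: "6 \<le> card verts"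
proof (rule ccontr)
  assume "\<not> 6 \<le> card verts"
  have "2 * int (card S) \<le> (\<Sum>w\<in>verts. int D)"
    unfolding sum_deg[symmetric] by (rule sum_mono) (rule deg_le)
  also have "\<dots> \<le> 5 * int D"
    using \<open>\<not> 6 \<le> card verts\<close> by (simp add: mult_right_mono)
  finally show False using overfull_int by linarith
qed

lemma card_nbrs_ge_3:
  assumes "w \<in> verts"
  shows "3 \<le> card (nbrs w)"
proof (rule ccontr)
  assume "\<not> 3 \<le> card (nbrs w)"
  define X where "X = deg w + 2 * int D - 2 - int (card S)"
  have "0 \<le> X" using deg_lower_bound[OF assms] unfolding X_def by linarith
  have "(\<Sum>y\<in>nbrs w. deg y) \<le> int (card (nbrs w)) * int D"
    using sum_mono[of "nbrs w" deg "\<lambda>_. int D"] deg_le by simp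
  hence "deg w \<le> int (card (nbrs w)) * X"
    using deg_le_sum_nbrs[of w] unfolding X_def by (simp add: algebra_simps)
  also have "\<dots> \<le> 2 * X"
    using \<open>\<not> 3 \<le> card (nbrs w)\<close> \<open>0 \<le> X\<close> by (intro mult_right_mono) auto
  finally show False using deg_le[of w] overfull_int unfolding X_def by (simp add: algebra_simps)
qed

lemma three_disjoint_edges:
  "\<exists>e1\<in>S. \<exists>e2\<in>S. \<exists>e3\<in>S.
    disjnt (ends e1) (ends e2) \<and> disjnt (ends e1) (ends e3) \<and> disjnt (ends e2) (ends e3)"
proof -
  have "S \<noteq> {}" using overfull by auto
  then obtain e1 where e1: "e1 \<in> S" by blast
  then obtain x y where xy: "ends e1 = {x, y}" "x \<noteq> y" by (rule ends_pairE)
  have small: "card {x, y} < 6" "card {x, y, z, t} < 6" "card {x, y, z, t, a} < 6" for z t a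
    using card_length[of "[x, y]"] card_length[of "[x, y, z, t]"] card_length[of "[x, y, z, t, a]"]
    by simp_all
  have "\<exists>z\<in>verts. z \<notin> {x, y}"
    by (rule ex_not_mem_of_card_less) (use small card_verts_ge_6 in auto)
  then obtain z where z: "z \<in> verts" "z \<notin> {x, y}" by blast
  have "\<exists>t\<in>nbrs z. t \<notin> {x, y}"
    by (rule ex_not_mem_of_card_less) (use card_nbrs_ge_3[OF z(1)] card_length[of "[x, y]"] in auto)
  then obtain t where t: "t \<in> nbrs z" "t \<notin> {x, y}" by blast
  obtain e2 where e2: "e2 \<in> S" "ends e2 = {z, t}" using nbrs_iff[THEN iffD1, OF t(1)] by blast
  have "\<exists>a\<in>verts. a \<notin> {x, y, z, t}"
    by (rule ex_not_mem_of_card_less) (use small(2)[of z t] card_verts_ge_6 in auto)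
  then obtain a where a: "a \<in> verts" "a \<notin> {x, y, z, t}" by blast
  have "\<exists>b\<in>verts. b \<notin> {x, y, z, t, a}"
    by (rule ex_not_mem_of_card_less) (use small(3)[of z t a] card_verts_ge_6 in auto)
  then obtain b where b: "b \<in> verts" "b \<notin> {x, y, z, t, a}" by blast
  have disj12: "disjnt (ends e1) (ends e2)" using xy e2 z t by auto
  show ?thesis
  proof (cases "\<exists>u\<in>S. ends u \<inter> {x, y, z, t} = {}")
    case True
    then obtain u where u: "u \<in> S" "ends u \<inter> {x, y, z, t} = {}" by blast
    hence "disjnt (ends e1) (ends u)" "disjnt (ends e2) (ends u)"
      using xy e2 by (auto simp: disjnt_def)
    thus ?thesis using e1 e2(1) u(1) disj12 by blast
  next
    case False
    have nbrs_sub: "nbrs r \<subseteq> {x, y, z, t}" if "r \<notin> {x, y, z, t}" for r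
    proof
      fix q assume "q \<in> nbrs r"
      then obtain u where u: "u \<in> S" "ends u = {r, q}" using nbrs_iff by meson
      show "q \<in> {x, y, z, t}"
      proof (rule ccontr)
        assume "q \<notin> {x, y, z, t}"
        hence "ends u \<inter> {x, y, z, t} = {}" using u(2) that by auto
        thus False using False u(1) by blast
      qed
    qed
    have pairs_a: "{x, y} \<subseteq> nbrs a \<or> {z, t} \<subseteq> nbrs a"
      using card_ge_3_subset_two_pairs(1)[OF nbrs_sub card_nbrs_ge_3] a by blast
    have pairs_b: "x \<in> nbrs b \<or> y \<in> nbrs b" "z \<in> nbrs b \<or> t \<in> nbrs b"
      using card_ge_3_subset_two_pairs(2,3)[OF nbrs_sub card_nbrs_ge_3] b by auto
    have "z \<noteq> t" using t(1) nbrs_subset by auto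
    from pairs_a show ?thesis
    proof
      assume "{x, y} \<subseteq> nbrs a"
      thus ?thesis
        using three_disjoint_edges_from_nbrs[OF e2 _ _ pairs_b(1)] xy a b z t by auto
    next
      assume "{z, t} \<subseteq> nbrs a"
      thus ?thesis
        using three_disjoint_edges_from_nbrs[OF e1 xy(1) _ _ pairs_b(2)] \<open>z \<noteq> t\<close> a b z t by auto
    qed
  qed
qed

lemma card_verts_le_6: "card verts \<le> 6"
proof (rule ccontr)
  assume "\<not> card verts \<le> 6"
  obtain e1 e2 e3 where e: "e1 \<in> S" "e2 \<in> S" "e3 \<in> S"
    and disj: "disjnt (ends e1) (ends e2)" "disjnt (ends e1) (ends e3)" "disjnt (ends e2) (ends e3)"
    using three_disjoint_edges by blast
  let ?U = "ends e1 \<union> ends e2 \<union> ends e3"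
  have "card ?U \<le> card (ends e1) + card (ends e2) + card (ends e3)"
    by (meson add_le_mono card_Un_le le_refl order_trans)
  hence "card ?U < card verts" using e card_ends \<open>\<not> card verts \<le> 6\<close> by simp
  then obtain c where c: "c \<in> verts - ?U"
    using ex_not_mem_of_card_less[of ?U verts] e finite_ends by auto
  have "deg c \<le> (\<Sum>w\<in>verts - ?U. deg w)"
    by (rule member_le_sum) (use c finite_verts in auto)
  thus False
    using deg_lower_bound[of c] c sum_deg_outside_disjoint_triple[OF e disj] overfull_int by auto
qed

context
  assumes card_verts_6: "card verts = 6"
begin

lemma card_nbrs_add_card_non_nbrs:
  assumes "w \<in> verts"
  shows "card (nbrs w) + card (non_nbrs w) = 5"
proof -
  have "non_nbrs w = (verts - {w}) - nbrs w" unfolding non_nbrs_def by auto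
  hence "card (non_nbrs w) = card (verts - {w}) - card (nbrs w)"
    using nbrs_subset finite_nbrs by (simp add: card_Diff_subset)
  moreover have "card (nbrs w) \<le> card (verts - {w})"
    using nbrs_subset finite_verts by (intro card_mono) auto
  moreover have "card (verts - {w}) = 5" using card_verts_6 assms finite_verts by simp
  ultimately show ?thesis by linarith
qed

lemma card_non_nbrs_mult_slack_less:
  assumes w: "w \<in> verts" and "non_nbrs w \<noteq> {}"
  shows "int (card (non_nbrs w)) * (int D - deg w) < (\<Sum>y\<in>non_nbrs w. int D - deg y)"
proof -
  have "finite (non_nbrs w)" unfolding non_nbrs_def using finite_verts by simp
  hence "card (non_nbrs w) \<noteq> 0" using assms(2) by simp
  moreover have "card (non_nbrs w) \<le> 2"
    using card_nbrs_add_card_non_nbrs[OF w] card_nbrs_ge_3[OF w] by linarith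
  ultimately consider "card (non_nbrs w) = 1" "card (nbrs w) = 4"
    | "card (non_nbrs w) = 2" "card (nbrs w) = 3"
    using card_nbrs_add_card_non_nbrs[OF w] by fastforce
  thus ?thesis
  proof cases
    case 1
    thus ?thesis
      using sum_deg_non_nbrs_le[OF w] deg_le[of w] overfull_int by (simp add: sum_subtractf)
  next
    case 2
    thus ?thesis
      using sum_deg_non_nbrs_le[OF w] deg_lower_bound[OF w] overfull_int by (simp add: sum_subtractf)
  qed
qed

text \<open>Summed over all vertices, both sides of the previous inequality count every non-adjacent
  pair once from each end, so it cannot be strict anywhere.\<close>

lemma non_nbrs_empty:
  assumes "w \<in> verts"
  shows "non_nbrs w = {}"
proof (rule ccontr)
  assume "non_nbrs w \<noteq> {}"
  let ?slack = "\<lambda>y. int D - deg y"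
  have "(\<Sum>y\<in>verts. int (card (non_nbrs y)) * ?slack y) < (\<Sum>y\<in>verts. \<Sum>z\<in>non_nbrs y. ?slack z)"
  proof (rule sum_strict_mono_ex1[OF finite_verts])
    show "\<forall>y\<in>verts. int (card (non_nbrs y)) * ?slack y \<le> (\<Sum>z\<in>non_nbrs y. ?slack z)"
      using card_non_nbrs_mult_slack_less by fastforce
    show "\<exists>y\<in>verts. int (card (non_nbrs y)) * ?slack y < (\<Sum>z\<in>non_nbrs y. ?slack z)"
      using card_non_nbrs_mult_slack_less assms \<open>non_nbrs w \<noteq> {}\<close> by blast
  qed
  also have "\<dots> = (\<Sum>y\<in>verts. int (card (non_nbrs y)) * ?slack y)"
    using sum_sum_symmetric_rel[OF finite_verts, of "\<lambda>w y. y \<noteq> w \<and> y \<notin> nbrs w" ?slack]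
    by (auto simp: non_nbrs_def nbrs_sym)
  finally show False by simp
qed

end

lemma card_verts_ne_6: "card verts \<noteq> 6"
proof
  assume six: "card verts = 6"
  have "0 \<le> 3 * deg w + 5 * int D - 10 - 3 * int (card S)" if "w \<in> verts" for w
    using sum_deg_non_nbrs_le[OF that] card_nbrs_add_card_non_nbrs[OF six that]
      non_nbrs_empty[OF six that] by simp
  hence "0 \<le> (\<Sum>w\<in>verts. 3 * deg w + 5 * int D - 10 - 3 * int (card S))"
    by (rule sum_nonneg)
  also have "\<dots> = 30 * int D - 60 - 12 * int (card S)"
    using six sum_deg by (simp add: sum.distrib sum_subtractf flip: sum_distrib_left)
  finally show False using overfull_int by linarith
qed

end

lemma (in edge_family) two_card_edges_le: "2 * card S \<le> 5 * D"
proof (rule ccontr)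
  assume "\<not> 2 * card S \<le> 5 * D"
  then interpret overfull_edge_family S ends D by unfold_locales linarith
  show False using card_verts_ge_6 card_verts_le_6 card_verts_ne_6 by linarith
qed

theorem small_set_family_bound:
  fixes S :: "'e set" and ends :: "'e \<Rightarrow> 'v set" and D :: nat
  assumes fin: "finite S"
    and ends_le: "\<And>e. e \<in> S \<Longrightarrow> finite (ends e) \<and> card (ends e) \<le> 2"
    and incident_le: "\<And>w. card {e\<in>S. w \<in> ends e} \<le> D"
    and disjoint_le: "\<And>e. e \<in> S \<Longrightarrow> card {u\<in>S. u \<noteq> e \<and> ends u \<inter> ends e = {}} + card (ends e) \<le> D"
    and "0 < D"
  shows "2 * card S \<le> 5 * D"
proof (cases "\<exists>e\<in>S. card (ends e) \<le> 1")
  case True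
  then obtain e where e: "e \<in> S" "card (ends e) \<le> 1" by blast
  let ?N = "{u\<in>S. u \<noteq> e \<and> ends u \<inter> ends e = {}}"
  let ?M = "\<Union>w\<in>ends e. {u\<in>S. w \<in> ends u}"
  have "S \<subseteq> insert e ?N \<union> ?M" by auto
  moreover have "finite (insert e ?N)" "finite ?M" using fin by (auto intro: finite_subset[of _ S])
  ultimately have "card S \<le> card (insert e ?N) + card ?M"
    by (meson card_Un_le card_mono finite_UnI order_trans)
  moreover have "card (insert e ?N) = Suc (card ?N)" using fin by simp
  moreover have "card ?M \<le> card (ends e) * D"
    using card_UN_le[of "ends e" "\<lambda>w. {u\<in>S. w \<in> ends u}"] ends_le[OF e(1)]
      sum_bounded_above[of "ends e" "\<lambda>w. card {u\<in>S. w \<in> ends u}" D] incident_le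
    by fastforce
  moreover have "card (ends e) = 0 \<or> card (ends e) = 1" using e(2) by auto
  ultimately show ?thesis using disjoint_le[OF e(1)] \<open>0 < D\<close> by auto
next
  case False
  hence card_ends: "\<And>e. e \<in> S \<Longrightarrow> card (ends e) = 2" using ends_le by fastforce
  have "card {u\<in>S. ends u \<inter> ends e = {}} + 2 \<le> D" if "e \<in> S" for e
  proof -
    have "ends e \<noteq> {}" using card_ends[OF that] by auto
    hence "{u\<in>S. ends u \<inter> ends e = {}} = {u\<in>S. u \<noteq> e \<and> ends u \<inter> ends e = {}}" by auto
    thus ?thesis using disjoint_le[OF that] card_ends[OF that] by simp
  qed
  with fin card_ends incident_le interpret edge_family S ends D by unfold_locales
  show ?thesis by (rule two_card_edges_le)
qed

lemma degeneracy_order_card_later_nbrs: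
  assumes order: "degeneracy_order V E k (xs @ ys)" and z: "z \<in> set xs"
  shows "card {y \<in> set ys. E z y} \<le> k"
proof -
  let ?zs = "xs @ ys"
  obtain i where i: "i < length xs" "xs ! i = z" using z by (meson in_set_conv_nth)
  let ?J = "{j. i < j \<and> j < length ?zs \<and> E (?zs ! i) (?zs ! j)}"
  have "{y \<in> set ys. E z y} \<subseteq> (!) ?zs ` ?J"
  proof
    fix y assume "y \<in> {y \<in> set ys. E z y}"
    then obtain j where "j < length ys" "ys ! j = y" "E z y" by (auto simp: in_set_conv_nth)
    thus "y \<in> (!) ?zs ` ?J"
      using i by (intro image_eqI[of _ _ "length xs + j"]) (auto simp: nth_append)
  qed
  hence "card {y \<in> set ys. E z y} \<le> card ((!) ?zs ` ?J)"
    by (intro card_mono) auto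
  also have "\<dots> \<le> card ?J" by (intro card_image_le) auto
  also have "\<dots> \<le> k" using order i unfolding degeneracy_order_def by auto
  finally show ?thesis .
qed

lemma clique_number_eq_card:
  assumes "max_clique V E S"
  shows "clique_number V E = card S"
proof -
  have le: "\<forall>n\<in>{card T | T. clique V E T}. n \<le> card S"
    using assms unfolding max_clique_def by auto
  hence "finite {card T | T. clique V E T}" by (meson finite_nat_set_iff_bounded_le)
  moreover have "card S \<in> {card T | T. clique V E T}" using assms unfolding max_clique_def by auto
  ultimately show ?thesis unfolding clique_number_def using le by (intro Max_eqI) auto
qed

locale nice_order =
  fixes V :: "'a set" and E :: "'a \<Rightarrow> 'a \<Rightarrow> bool" and D :: nat and S :: "'a set"
    and A B C :: "'a list"
  assumes graph: "graph V E"
    and max_degree: "max_degree_le V E D"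
    and order: "degeneracy_order V E 2 (A @ B @ C)"
    and block: "set B = S"
    and clique: "clique V (square E) S"
    and independent: "independent V E S"
begin

definition later_nbrs :: "'a \<Rightarrow> 'a set" where
  "later_nbrs v = {w \<in> set C. E v w}"

definition earlier_nbrs :: "'a \<Rightarrow> 'a set" where
  "earlier_nbrs v = {w \<in> set A. E v w}"

lemma finite_V: "finite V" and edge_sym: "E x y \<Longrightarrow> E y x" and edge_in_V: "E x y \<Longrightarrow> x \<in> V \<and> y \<in> V"
  using graph unfolding graph_def by auto

lemma card_nbrs_le: "x \<in> V \<Longrightarrow> card {y\<in>V. E x y} \<le> D"
  using max_degree unfolding max_degree_le_def degree_def by auto

lemma S_subset_V: "S \<subseteq> V"
  using clique unfolding clique_def by simp

lemma block_square: "x \<in> S \<Longrightarrow> y \<in> S \<Longrightarrow> x \<noteq> y \<Longrightarrow> square E x y"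
  using clique unfolding clique_def by blast

lemma block_no_edge: "x \<in> S \<Longrightarrow> y \<in> S \<Longrightarrow> \<not> E x y"
  using independent unfolding independent_def by blast

lemma set_order: "set A \<union> set B \<union> set C = V" and disjoint_AC: "set A \<inter> set C = {}"
  using order unfolding degeneracy_order_def by auto

lemma card_later_nbrs_le: "v \<in> S \<Longrightarrow> card (later_nbrs v) \<le> 2"
  using degeneracy_order_card_later_nbrs[of V E 2 "A @ B" C v] order block
  unfolding later_nbrs_def by simp

lemma card_block_nbrs_le: "z \<in> set A \<Longrightarrow> card {y\<in>S. E z y} \<le> 2"
proof -
  assume "z \<in> set A"
  hence "card {y \<in> set (B @ C). E z y} \<le> 2"
    using degeneracy_order_card_later_nbrs[of V E 2 A "B @ C" z] order by simp
  moreover have "card {y\<in>S. E z y} \<le> card {y \<in> set (B @ C). E z y}"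
    by (intro card_mono) (use block in auto)
  ultimately show ?thesis by linarith
qed

lemma card_having_later_nbr_le: "card {v\<in>S. w \<in> later_nbrs v} \<le> D"
proof (cases "w \<in> set C")
  case True
  hence "w \<in> V" using set_order by auto
  have "{v\<in>S. w \<in> later_nbrs v} \<subseteq> {y\<in>V. E w y}"
    using S_subset_V edge_sym unfolding later_nbrs_def by auto
  hence "card {v\<in>S. w \<in> later_nbrs v} \<le> card {y\<in>V. E w y}"
    using finite_V by (intro card_mono) auto
  also have "\<dots> \<le> D" by (rule card_nbrs_le[OF \<open>w \<in> V\<close>])
  finally show ?thesis .
qed (auto simp: later_nbrs_def)

lemma common_earlier_nbr:
  assumes u: "u \<in> S" and v: "v \<in> S" "u \<noteq> v" and disj: "later_nbrs u \<inter> later_nbrs v = {}"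
  obtains z where "z \<in> earlier_nbrs v" "E z u"
proof -
  have "square E v u" using block_square v(1) u v(2) by simp
  moreover have "\<not> E v u" using block_no_edge v(1) u .
  ultimately obtain z where z: "E v z" "E z u" unfolding square_def by blast
  have "z \<notin> S" using block_no_edge v(1) z(1) by blast
  have "z \<notin> set C"
  proof
    assume "z \<in> set C"
    hence "z \<in> later_nbrs u \<inter> later_nbrs v" using z edge_sym unfolding later_nbrs_def by auto
    thus False using disj by simp
  qed
  have "z \<in> V" using edge_in_V z(1) by blast
  hence "z \<in> set A" using set_order block \<open>z \<notin> S\<close> \<open>z \<notin> set C\<close> by auto
  thus ?thesis using that z unfolding earlier_nbrs_def by blast
qed

lemma card_disjoint_later_le_card_earlier:
  assumes v: "v \<in> S"
  shows "card {u\<in>S. u \<noteq> v \<and> later_nbrs u \<inter> later_nbrs v = {}} \<le> card (earlier_nbrs v)"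
proof -
  let ?N = "{u\<in>S. u \<noteq> v \<and> later_nbrs u \<inter> later_nbrs v = {}}"
  have "?N \<subseteq> (\<Union>z\<in>earlier_nbrs v. {u\<in>S. E z u} - {v})"
  proof
    fix u assume "u \<in> ?N"
    then obtain z where "z \<in> earlier_nbrs v" "E z u"
      by (elim CollectE conjE common_earlier_nbr[OF _ v]) auto
    thus "u \<in> (\<Union>z\<in>earlier_nbrs v. {u\<in>S. E z u} - {v})" using \<open>u \<in> ?N\<close> by blast
  qed
  hence "card ?N \<le> card (\<Union>z\<in>earlier_nbrs v. {u\<in>S. E z u} - {v})"
    using finite_V S_subset_V by (intro card_mono) (auto intro: finite_subset)
  also have "\<dots> \<le> (\<Sum>z\<in>earlier_nbrs v. card ({u\<in>S. E z u} - {v}))"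
    by (rule card_UN_le) (simp add: earlier_nbrs_def)
  also have "\<dots> \<le> (\<Sum>z\<in>earlier_nbrs v. 1)"
  proof (rule sum_mono)
    fix z assume z: "z \<in> earlier_nbrs v"
    hence "v \<in> {u\<in>S. E z u}" using v edge_sym unfolding earlier_nbrs_def by blast
    moreover have "card {u\<in>S. E z u} \<le> 2" using card_block_nbrs_le z unfolding earlier_nbrs_def by blast
    ultimately show "card ({u\<in>S. E z u} - {v}) \<le> 1" by (simp add: card_Diff_singleton_if)
  qed
  finally show ?thesis by simp
qed

lemma card_earlier_add_later_le: "v \<in> S \<Longrightarrow> card (earlier_nbrs v) + card (later_nbrs v) \<le> D"
proof -
  assume v: "v \<in> S"
  have "card (earlier_nbrs v) + card (later_nbrs v) = card (earlier_nbrs v \<union> later_nbrs v)"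
    using disjoint_AC by (intro card_Un_disjoint[symmetric]) (auto simp: earlier_nbrs_def later_nbrs_def)
  also have "\<dots> \<le> card {y\<in>V. E v y}"
    using finite_V edge_in_V by (intro card_mono) (auto simp: earlier_nbrs_def later_nbrs_def)
  also have "\<dots> \<le> D" using card_nbrs_le S_subset_V v by blast
  finally show ?thesis .
qed

end

theorem theorem3:
  fixes V :: "'a set" and E :: "'a \<Rightarrow> 'a \<Rightarrow> bool" and D :: nat and S :: "'a set"
  assumes "D > 0"
    and "graph V E"
    and "max_degree_le V E D"
    and "max_clique V (square E) S"
    and "nice V E S"
  shows "2 * clique_number V (square E) \<le> 5 * D"
proof -
  obtain A B C where "clique V (square E) S" "independent V E S"
    "degeneracy_order V E 2 (A @ B @ C)" "set B = S"
    using assms(5) unfolding nice_def by blast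
  with assms(2,3) interpret nice_order V E D S A B C by unfold_locales
  have "2 * card S \<le> 5 * D"
  proof (rule small_set_family_bound[where ends = later_nbrs])
    show "finite S" using finite_subset[OF S_subset_V finite_V] .
    show "finite (later_nbrs v) \<and> card (later_nbrs v) \<le> 2" if "v \<in> S" for v
      using card_later_nbrs_le[OF that] by (simp add: later_nbrs_def)
    show "card {u\<in>S. u \<noteq> v \<and> later_nbrs u \<inter> later_nbrs v = {}} + card (later_nbrs v) \<le> D"
      if "v \<in> S" for v
      using card_disjoint_later_le_card_earlier[OF that] card_earlier_add_later_le[OF that] by linarith
  qed (use card_having_later_nbr_le assms(1) in auto)
  thus ?thesis using clique_number_eq_card[OF assms(4)] by simp
qed

end
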